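(* There is a constant $C>0$ depending only on $\theta_*$ (and the fixed model $w$) such that for every $1$-Lipschitz function $\ell$ on $[0,\theta_*]$ with $\ell(0)=0$ and every integer $k\ge1$, there exist real coefficients $b_0,\dots,b_k$ such that $\hat\ell(\theta)=\sum_{x=0}^k b_x f(x\mid\theta)$ satisfies $$\max_{\theta\in[0,\theta_*]}|\ell(\theta)-\hat\ell(\theta)|\le C/k\quad\text{and}\quad \max_{0\le x\le k}|b_x|\le C^k\max_{1\le x\le k}\frac1{w(x)}.$$
   Context: Discrete exponential family model: fix $\theta_*>0$ and $w(x)>0$, $x=0,1,2,\dots$, such that $\sum_{x\ge0}w(x)\theta^x$ has radius of convergence $\theta_r\in(0,\infty]$ with $\theta_*<\theta_r$; $g(\theta)=\big(\sum_{x\ge 0}w(x)\theta^x\big)^{-1}$ and $f(x\mid\theta)=g(\theta)w(x)\theta^x$ for $x\in\{0,1,\dots\}$, $\theta\in[0,\theta_*]$. *)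

theory Defs
  imports "HOL-Analysis.Analysis"
begin

definition gfun :: "(nat \<Rightarrow> real) \<Rightarrow> real \<Rightarrow> real" where
  "gfun w \<theta> = inverse (\<Sum>x. w x * \<theta> ^ x)"

definition fpmf :: "(nat \<Rightarrow> real) \<Rightarrow> nat \<Rightarrow> real \<Rightarrow> real" where
  "fpmf w x \<theta> = gfun w \<theta> * w x * \<theta> ^ x"

end

theory Submission
  imports Defs
begin

text \<open>Writing $Z(\theta) = \sum_x w(x)\theta^x = 1/g(\theta)$, we have
  $\sum_x b_x f(x \mid \theta) = g(\theta) \sum_x b_x w(x) \theta^x$. So it suffices to approximate
  the Lipschitz function $\ell Z$ on $[0,\theta_*]$ by a polynomial of degree $k$ with error $O(1/k)$
  and coefficients of size $C^k$, and to divide the coefficient of $\theta^x$ by $w(x)$.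
  After rescaling to $[0,1]$ such polynomials are obtained by convolution with a Jackson-type
  kernel of order $n \approx k/24$, the fourth power of a Taylor polynomial of $\sin(nu)/(nu)$:
  its mass is at least of order $1/n$ and its second moment at most of order $1/n^3$, which gives
  the error bound, while its coefficients grow only exponentially in $n$.\<close>

section \<open>Taylor polynomials of $\sin x / x$\<close>

definition sinc_taylor :: "nat \<Rightarrow> real \<Rightarrow> real" where
  "sinc_taylor M x = (\<Sum>m<M. sin_coeff (Suc m) * x ^ m)"

lemma times_sinc_taylor: "x * sinc_taylor M x = (\<Sum>m<Suc M. sin_coeff m * x ^ m)"
  unfolding sinc_taylor_def sum.lessThan_Suc_shift by (simp add: sum_distrib_left mult_ac)

lemma times_sinc_taylor_minus_sin: "\<bar>x * sinc_taylor M x - sin x\<bar> \<le> \<bar>x\<bar> ^ Suc M / fact (Suc M)"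
  using Maclaurin_sin_bound[of x "Suc M"] unfolding times_sinc_taylor[symmetric]
  by (simp add: abs_minus_commute divide_inverse mult_ac)

lemma sinc_taylor_2 [simp]: "sinc_taylor 2 x = 1"
  by (simp add: sinc_taylor_def eval_nat_numeral sin_coeff_def)

lemma sinc_taylor_0: "0 < M \<Longrightarrow> sinc_taylor M 0 = 1"
  unfolding sinc_taylor_def by (cases M) (simp_all add: sum.lessThan_Suc_shift sin_coeff_def)

lemma power_div_fact_le_exp:
  assumes "(0::real) \<le> x" shows "x ^ n / fact n \<le> exp x"
proof -
  have s: "(\<lambda>m. x ^ m / fact m) sums exp x"
    using exp_converges[of x] by (simp add: divide_inverse mult_ac)
  have "sum (\<lambda>m. x ^ m / fact m) {n} \<le> suminf (\<lambda>m. x ^ m / fact m)"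
    by (rule sum_le_suminf) (use s assms in \<open>auto simp: sums_iff\<close>)
  then show ?thesis using s by (simp add: sums_iff)
qed

lemma exp_of_nat_le_3_power: "exp (real n) \<le> 3 ^ n"
proof -
  have "exp (real n) = exp 1 ^ n" by (simp add: exp_of_nat_mult[symmetric])
  also have "\<dots> \<le> 3 ^ n" by (rule power_mono) (use exp_le in auto)
  finally show ?thesis .
qed

lemma power_div_fact_le_1:
  assumes X: "(0::real) \<le> X" and N: "3 * X \<le> real N"
  shows "X ^ N / fact N \<le> 1"
proof (cases "N = 0")
  case False
  then have Npos: "real N > 0" by simp
  have "X ^ N / fact N = (X / real N) ^ N * (real N ^ N / fact N)"
    using Npos by (simp add: power_divide)
  also have "\<dots> \<le> (1/3) ^ N * 3 ^ N"
  proof (rule mult_mono)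
    show "(X / real N) ^ N \<le> (1/3) ^ N"
      by (rule power_mono) (use X N Npos in \<open>auto simp: field_simps\<close>)
    show "real N ^ N / fact N \<le> 3 ^ N"
      using power_div_fact_le_exp[of "real N" N] exp_of_nat_le_3_power[of N] by simp
  qed (use X in auto)
  also have "\<dots> = 1" by (simp add: power_mult_distrib[symmetric])
  finally show ?thesis .
qed simp

lemma sinc_taylor_near_1:
  assumes M: "2 \<le> M" and x: "\<bar>x\<bar> \<le> 1"
  shows "\<bar>sinc_taylor M x - 1\<bar> \<le> 1/3"
proof (cases "x = 0")
  case True then show ?thesis using M sinc_taylor_0 by simp
next
  case False
  have "(6::real) = fact 3" by (simp add: eval_nat_numeral)
  also have "\<dots> \<le> fact (Suc M)" by (rule fact_mono) (use M in auto)
  finally have "\<bar>x\<bar> ^ Suc M / fact (Suc M) \<le> \<bar>x\<bar> ^ 3 / 6"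
    by (intro frac_le power_decreasing) (use M x in auto)
  moreover have "\<bar>x - sin x\<bar> \<le> \<bar>x\<bar> ^ 3 / 6"
    using times_sinc_taylor_minus_sin[of x 2] by (simp add: numeral_3_eq_3)
  ultimately have "\<bar>x * sinc_taylor M x - x\<bar> \<le> \<bar>x\<bar> ^ 3 / 3"
    using times_sinc_taylor_minus_sin[of x M] by linarith
  then have "\<bar>x\<bar> * \<bar>sinc_taylor M x - 1\<bar> \<le> \<bar>x\<bar> * (x\<^sup>2 / 3)"
    by (simp add: abs_mult[symmetric] right_diff_distrib power2_eq_square power3_eq_cube abs_mult_self_eq)
  then have "\<bar>sinc_taylor M x - 1\<bar> \<le> x\<^sup>2 / 3" using False by simp
  moreover have "x\<^sup>2 \<le> 1" using abs_le_square_iff[of x 1] x by simp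
  ultimately show ?thesis by simp
qed

lemma abs_times_sinc_taylor_le_2:
  assumes x: "\<bar>x\<bar> \<le> 2 * real n"
  shows "\<bar>x * sinc_taylor (6*n) x\<bar> \<le> 2"
proof -
  have "\<bar>x\<bar> ^ Suc (6*n) / fact (Suc (6*n)) \<le> (2 * real n) ^ Suc (6*n) / fact (Suc (6*n))"
    by (intro divide_right_mono power_mono) (use x in auto)
  also have "\<dots> \<le> 1" by (rule power_div_fact_le_1) auto
  finally show ?thesis
    using times_sinc_taylor_minus_sin[of x "6*n"] abs_sin_le_one[of x] by linarith
qed

text \<open>For $|x| \le 2n$ the polynomial behaves like $\sin x / x$, which decays like $1/|x|$.\<close>
lemma sinc_taylor_sq_decay:
  assumes n: "1 \<le> n" and x: "\<bar>x\<bar> \<le> 2 * real n"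
  shows "(sinc_taylor (6*n) x)\<^sup>2 * (1 + x\<^sup>2) \<le> 8"
proof (cases "\<bar>x\<bar> \<le> 1")
  case True
  have "\<bar>sinc_taylor (6*n) x\<bar> \<le> 4/3" using sinc_taylor_near_1[of "6*n" x] n True by linarith
  then have "(sinc_taylor (6*n) x)\<^sup>2 \<le> (4/3)\<^sup>2"
    using abs_le_square_iff[of "sinc_taylor (6*n) x" "4/3"] by simp
  moreover have "x\<^sup>2 \<le> 1" using abs_le_square_iff[of x 1] True by simp
  ultimately have "(sinc_taylor (6*n) x)\<^sup>2 * (1 + x\<^sup>2) \<le> (4/3)\<^sup>2 * 2"
    by (intro mult_mono) auto
  then show ?thesis by (simp add: power2_eq_square)
next
  case False
  have "x\<^sup>2 * (sinc_taylor (6*n) x)\<^sup>2 \<le> 4"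
    using abs_times_sinc_taylor_le_2[OF x] abs_le_square_iff[of "x * sinc_taylor (6*n) x" 2]
    by (simp add: power_mult_distrib)
  moreover have "1 \<le> x\<^sup>2" using False abs_le_square_iff[of 1 x] by simp
  then have "(sinc_taylor (6*n) x)\<^sup>2 \<le> x\<^sup>2 * (sinc_taylor (6*n) x)\<^sup>2"
    by (simp add: mult_le_cancel_right1)
  ultimately show ?thesis by (simp add: algebra_simps)
qed

section \<open>A polynomial Jackson kernel\<close>

definition jackson_kernel :: "nat \<Rightarrow> real \<Rightarrow> real" where
  "jackson_kernel n u = (sinc_taylor (6*n) (real n * u)) ^ 4"

lemma jackson_kernel_nonneg: "0 \<le> jackson_kernel n u"
  unfolding jackson_kernel_def by (simp add: zero_le_even_power)

lemma continuous_on_sinc_taylor: "continuous_on S (sinc_taylor M)"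
  unfolding sinc_taylor_def[abs_def] by (intro continuous_intros)

lemma continuous_on_jackson_kernel: "continuous_on S (jackson_kernel n)"
  unfolding jackson_kernel_def[abs_def]
  by (intro continuous_intros continuous_on_compose2[OF continuous_on_sinc_taylor[of UNIV]]) auto

lemma jackson_kernel_integrable: "jackson_kernel n integrable_on {a..b}"
  by (rule integrable_continuous_interval[OF continuous_on_jackson_kernel])

lemma jackson_kernel_moment_integrable: "(\<lambda>u. u\<^sup>2 * jackson_kernel n u) integrable_on {a..b}"
  by (rule integrable_continuous_interval) (intro continuous_intros continuous_on_jackson_kernel)

lemma jackson_kernel_le:
  assumes n: "1 \<le> n" and u: "\<bar>u\<bar> \<le> 2"
  shows "jackson_kernel n u \<le> 64 / (1 + (real n * u)\<^sup>2)\<^sup>2"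
proof -
  have "\<bar>real n * u\<bar> \<le> 2 * real n"
    using mult_left_mono[OF u, of "real n"] by (simp add: abs_mult mult.commute)
  then have "((sinc_taylor (6*n) (real n * u))\<^sup>2 * (1 + (real n * u)\<^sup>2))\<^sup>2 \<le> 8\<^sup>2"
    by (intro power_mono sinc_taylor_sq_decay n) simp_all
  then have "jackson_kernel n u * (1 + (real n * u)\<^sup>2)\<^sup>2 \<le> 64"
    unfolding jackson_kernel_def by (simp add: power_mult_distrib power_mult[symmetric])
  moreover have "0 < 1 + (real n * u)\<^sup>2" by (simp add: add_pos_nonneg)
  then have "0 < (1 + (real n * u)\<^sup>2)\<^sup>2" by simp
  ultimately show ?thesis by (simp add: le_divide_eq)
qed

lemma jackson_kernel_ge:
  assumes n: "1 \<le> n" and u: "\<bar>u\<bar> \<le> 1 / real n"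
  shows "1/6 \<le> jackson_kernel n u"
proof -
  have "\<bar>real n * u\<bar> \<le> 1" using u n by (simp add: abs_mult field_simps)
  then have "2/3 \<le> sinc_taylor (6*n) (real n * u)"
    using sinc_taylor_near_1[of "6*n" "real n * u"] n by linarith
  then have "(2/3)^4 \<le> (sinc_taylor (6*n) (real n * u))^4" by (rule power_mono) simp
  then show ?thesis unfolding jackson_kernel_def by (simp add: power_divide)
qed

lemma jackson_kernel_integral_ge:
  assumes n: "1 \<le> n"
  shows "1 / (3 * real n) \<le> integral {-1..1} (jackson_kernel n)"
proof -
  have "1 / (3 * real n) = integral {-(1/real n)..1/real n} (\<lambda>_. 1/6::real)"
    using n by simp
  also have "\<dots> \<le> integral {-(1/real n)..1/real n} (jackson_kernel n)"
    by (rule integral_le)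
       (use jackson_kernel_ge[OF n] jackson_kernel_integrable in \<open>auto simp: abs_le_iff\<close>)
  also have "\<dots> \<le> integral {-1..1} (jackson_kernel n)"
    by (rule integral_subset_le)
       (use n jackson_kernel_nonneg jackson_kernel_integrable in auto)
  finally show ?thesis .
qed

lemma has_real_derivative_arctan_plus_quotient:
  "((\<lambda>y. arctan y + s * (y / (1 + y\<^sup>2))) has_real_derivative
     ((1 + s) + (1 - s) * y\<^sup>2) / (1 + y\<^sup>2)\<^sup>2) (at y)"
proof -
  have pos: "1 + y\<^sup>2 \<noteq> 0" by (simp add: add_pos_nonneg add_nonneg_eq_0_iff)
  have "((\<lambda>y. y / (1 + y\<^sup>2)) has_real_derivative (1 * (1 + y\<^sup>2) - 2 * y * y) / (1 + y\<^sup>2)\<^sup>2) (at y)"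
    using DERIV_quotient[OF DERIV_ident DERIV_add[OF DERIV_const[of 1] DERIV_pow[of 2 y]] pos]
    by (simp add: numeral_2_eq_2)
  from DERIV_add[OF DERIV_arctan DERIV_cmult[OF this, of s]]
  have "((\<lambda>y. arctan y + s * (y / (1 + y\<^sup>2))) has_real_derivative
          inverse (1 + y\<^sup>2) + s * ((1 * (1 + y\<^sup>2) - 2 * y * y) / (1 + y\<^sup>2)\<^sup>2)) (at y)" .
  moreover have "inverse (1 + y\<^sup>2) + s * ((1 * (1 + y\<^sup>2) - 2 * y * y) / (1 + y\<^sup>2)\<^sup>2)
      = ((1 + s) + (1 - s) * y\<^sup>2) / (1 + y\<^sup>2)\<^sup>2"
  proof -
    define D where "D = 1 + y\<^sup>2"
    have "y * y = D - 1" "D \<noteq> 0" using pos unfolding D_def by (simp_all add: power2_eq_square)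
    then show ?thesis unfolding D_def[symmetric] power2_eq_square
      by (simp add: field_simps) (auto simp: algebra_simps)
  qed
  ultimately show ?thesis by simp
qed

lemma abs_arctan_plus_quotient_le_3:
  assumes "\<bar>s\<bar> \<le> 1" shows "\<bar>arctan y + s * (y / (1 + y\<^sup>2))\<bar> \<le> 3"
proof -
  have "0 \<le> (\<bar>y\<bar> - 1)\<^sup>2" by simp
  then have "\<bar>y\<bar> \<le> 1 + y\<^sup>2"
    by (simp add: power2_eq_square algebra_simps abs_mult_self_eq)
  then have "\<bar>y / (1 + y\<^sup>2)\<bar> \<le> 1" by (simp add: abs_div divide_le_eq add_pos_nonneg)
  then have "\<bar>s * (y / (1 + y\<^sup>2))\<bar> \<le> 1"
    using assms by (simp add: abs_mult mult_le_one del: times_divide_eq_right)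
  moreover have "\<bar>arctan y\<bar> \<le> 2" using arctan_bounded[of y] pi_less_4 by linarith
  ultimately show ?thesis by linarith
qed

text \<open>For $s = 1$ and $s = -1$ the integrand majorises the kernel and $n^2$ times its second
  moment, respectively.\<close>
lemma arctan_majorant_has_integral_le:
  assumes n: "1 \<le> n" and s: "\<bar>s\<bar> \<le> 1"
  obtains I where
    "((\<lambda>u. 32 * ((1 + s) + (1 - s) * (real n * u)\<^sup>2) / (1 + (real n * u)\<^sup>2)\<^sup>2) has_integral I) {-2..2}"
    and "I \<le> 192 / real n"
proof -
  define h where "h y = arctan y + s * (y / (1 + y\<^sup>2))" for y
  define F where "F u = 32 / real n * h (real n * u)" for u
  have "(F has_real_derivative 32 * ((1 + s) + (1 - s) * (real n * u)\<^sup>2) / (1 + (real n * u)\<^sup>2)\<^sup>2) (at u)"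
    for u
  proof -
    have "((\<lambda>u. h (real n * u)) has_real_derivative
           ((1 + s) + (1 - s) * (real n * u)\<^sup>2) / (1 + (real n * u)\<^sup>2)\<^sup>2 * real n) (at u)"
      unfolding h_def
      by (rule DERIV_chain2[OF has_real_derivative_arctan_plus_quotient])
         (rule derivative_eq_intros refl | simp)+
    from DERIV_cmult[OF this, of "32 / real n"] show ?thesis
      unfolding F_def using n by simp
  qed
  then have "((\<lambda>u. 32 * ((1 + s) + (1 - s) * (real n * u)\<^sup>2) / (1 + (real n * u)\<^sup>2)\<^sup>2)
      has_integral (F 2 - F (-2))) {-2..2}"
    by (intro fundamental_theorem_of_calculus)
       (auto simp: has_real_derivative_iff_has_vector_derivative[symmetric] intro: DERIV_subset)
  moreover have "F 2 - F (-2) \<le> 192 / real n"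
  proof -
    have "F 2 - F (-2) = 32 / real n * (h (real n * 2) - h (real n * (-2)))"
      unfolding F_def by (simp add: right_diff_distrib)
    also have "\<dots> \<le> 32 / real n * 6"
    proof (rule mult_left_mono)
      have "\<bar>h y\<bar> \<le> 3" for y unfolding h_def by (rule abs_arctan_plus_quotient_le_3[OF s])
      from this[of "real n * 2"] this[of "real n * (-2)"]
      show "h (real n * 2) - h (real n * (-2)) \<le> 6" by linarith
    qed simp
    finally show ?thesis by simp
  qed
  ultimately show ?thesis by (rule that)
qed

lemma jackson_kernel_integral_le:
  assumes n: "1 \<le> n"
  shows "integral {-2..2} (jackson_kernel n) \<le> 192 / real n"
proof -
  obtain I where I: "((\<lambda>u. 32 * ((1 + 1) + (1 - 1) * (real n * u)\<^sup>2) / (1 + (real n * u)\<^sup>2)\<^sup>2)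
      has_integral I) {-2..2}" and "I \<le> 192 / real n"
    using arctan_majorant_has_integral_le[OF n, of 1] by auto
  moreover have "integral {-2..2} (jackson_kernel n) \<le> I"
    using jackson_kernel_le[OF n] jackson_kernel_integrable
    by (intro has_integral_le[OF integrable_integral I]) auto
  ultimately show ?thesis by linarith
qed

lemma jackson_kernel_moment_le:
  assumes n: "1 \<le> n"
  shows "integral {-2..2} (\<lambda>u. u\<^sup>2 * jackson_kernel n u) \<le> 192 / real n ^ 3"
proof -
  obtain I where I: "((\<lambda>u. 32 * ((1 + -1) + (1 - -1) * (real n * u)\<^sup>2) / (1 + (real n * u)\<^sup>2)\<^sup>2)
      has_integral I) {-2..2}" and I_le: "I \<le> 192 / real n"
    using arctan_majorant_has_integral_le[OF n, of "-1"] by auto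
  have "u\<^sup>2 * jackson_kernel n u \<le> 32 * ((1 + -1) + (1 - -1) * (real n * u)\<^sup>2) / (1 + (real n * u)\<^sup>2)\<^sup>2 / (real n)\<^sup>2"
    if "u \<in> {-2..2}" for u
  proof -
    have "u\<^sup>2 * jackson_kernel n u \<le> u\<^sup>2 * (64 / (1 + (real n * u)\<^sup>2)\<^sup>2)"
      by (rule mult_left_mono) (use jackson_kernel_le[OF n] that in auto)
    then show ?thesis using n by (simp add: field_simps power_mult_distrib)
  qed
  then have "integral {-2..2} (\<lambda>u. u\<^sup>2 * jackson_kernel n u) \<le> I / (real n)\<^sup>2"
    by (intro has_integral_le[OF integrable_integral has_integral_divide[OF I]]
        jackson_kernel_moment_integrable)
  also have "\<dots> \<le> 192 / real n ^ 3"
    using divide_right_mono[OF I_le, of "(real n)\<^sup>2"] by (simp add: power2_eq_square power3_eq_cube)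
  finally show ?thesis .
qed

section \<open>Convolution with the kernel\<close>

lemma has_integral_reflect_shift_real:
  fixes h :: "real \<Rightarrow> real"
  assumes "(h has_integral I) {a..b}"
  shows "((\<lambda>t. h (x - t)) has_integral I) {x-b..x-a}"
proof -
  have "((\<lambda>s. h (s + x)) has_integral I) {a-x..b-x}"
    by (rule has_integral_shift_real_ivl[OF assms])
  then have "((\<lambda>t. h (- t + x)) has_integral I) {-(b-x)..-(a-x)}"
    by (subst has_integral_reflect_real)
  then show ?thesis by simp
qed

lemma abs_le_quadratic_bound:
  fixes c d :: real assumes "0 < c"
  shows "\<bar>d\<bar> \<le> c * d\<^sup>2 / 2 + 1 / (2 * c)"
proof -
  have "0 \<le> (c * \<bar>d\<bar> - 1)\<^sup>2" by simp
  then have "2 * c * \<bar>d\<bar> \<le> c\<^sup>2 * d\<^sup>2 + 1"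
    by (simp add: power2_eq_square algebra_simps abs_mult_self_eq)
  then show ?thesis using assms by (simp add: field_simps power2_eq_square)
qed

text \<open>Outside $[-1,1]$ the weight $u^2$ dominates $1$, so the mass of the kernel on the window
  $[x-2, x+1] \supseteq [-1,1]$ exceeds its mass on $[-1,1]$ by at most its second moment.\<close>
lemma jackson_kernel_window:
  assumes x: "x \<in> {0..1}"
  shows "integral {-1..1} (jackson_kernel n) \<le> integral {x-2..x+1} (jackson_kernel n)"
    and "integral {x-2..x+1} (jackson_kernel n) - integral {-1..1} (jackson_kernel n)
           \<le> integral {x-2..x+1} (\<lambda>u. u\<^sup>2 * jackson_kernel n u)"
proof -
  let ?p = "jackson_kernel n" and ?q = "\<lambda>u. u\<^sup>2 * jackson_kernel n u"
  have x0: "0 \<le> x" and x1: "x \<le> 1" using x by auto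
  note ints = jackson_kernel_integrable jackson_kernel_moment_integrable
  have split: "integral {x-2..-1} f + integral {-1..1} f + integral {1..x+1} f = integral {x-2..x+1} f"
    if "\<And>a b. f integrable_on {a..b}" for f :: "real \<Rightarrow> real"
  proof -
    have "integral {x-2..-1} f + integral {-1..x+1} f = integral {x-2..x+1} f"
      by (rule Henstock_Kurzweil_Integration.integral_combine) (use x0 x1 that in auto)
    moreover have "integral {-1..1} f + integral {1..x+1} f = integral {-1..x+1} f"
      by (rule Henstock_Kurzweil_Integration.integral_combine) (use x0 x1 that in auto)
    ultimately show ?thesis by linarith
  qed
  have p_le_q: "integral {a..b} ?p \<le> integral {a..b} ?q" if "\<And>u. u \<in> {a..b} \<Longrightarrow> 1 \<le> \<bar>u\<bar>" for a b
  proof (rule integral_le)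
    fix u assume "u \<in> {a..b}"
    then have "1 \<le> u\<^sup>2" using that by (metis abs_le_square_iff abs_one power_one)
    then show "?p u \<le> ?q u" using jackson_kernel_nonneg[of n u] by (simp add: mult_le_cancel_right1)
  qed (use ints in auto)
  have "0 \<le> integral {x-2..-1} ?p" "0 \<le> integral {1..x+1} ?p" "0 \<le> integral {-1..1} ?q"
    by (intro integral_nonneg ints; simp add: jackson_kernel_nonneg)+
  moreover have "integral {x-2..-1} ?p \<le> integral {x-2..-1} ?q"
    "integral {1..x+1} ?p \<le> integral {1..x+1} ?q"
    by (intro p_le_q; auto)+
  ultimately show "integral {-1..1} ?p \<le> integral {x-2..x+1} ?p"
    and "integral {x-2..x+1} ?p - integral {-1..1} ?p \<le> integral {x-2..x+1} ?q"
    using split[of ?p] split[of ?q] ints by auto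
qed

lemma lipschitz_convolution_deviation:
  fixes G p :: "real \<Rightarrow> real"
  assumes G: "L-lipschitz_on UNIV G" and p: "\<And>u. 0 \<le> p u" and c: "0 < c"
    and A: "((\<lambda>t. G t * p (x - t)) has_integral A) S"
    and J0: "((\<lambda>t. p (x - t)) has_integral J0) S"
    and J2: "((\<lambda>t. (x - t)\<^sup>2 * p (x - t)) has_integral J2) S"
  shows "\<bar>A - G x * J0\<bar> \<le> (L * c / 2) * J2 + (L / (2 * c)) * J0"
proof -
  have pointwise: "\<bar>G t * p (x - t) - G x * p (x - t)\<bar>
      \<le> (L * c / 2) * ((x - t)\<^sup>2 * p (x - t)) + (L / (2 * c)) * p (x - t)" for t
  proof -
    have "\<bar>G t - G x\<bar> \<le> L * \<bar>x - t\<bar>"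
      using lipschitz_onD[OF G, of t x] by (simp add: dist_real_def abs_minus_commute)
    also have "\<dots> \<le> L * (c * (x - t)\<^sup>2 / 2 + 1 / (2 * c))"
      by (intro mult_left_mono abs_le_quadratic_bound c lipschitz_on_nonneg[OF G])
    finally have "\<bar>G t - G x\<bar> * p (x - t) \<le> \<dots> * p (x - t)"
      by (rule mult_right_mono) (rule p)
    moreover have "\<bar>G t * p (x - t) - G x * p (x - t)\<bar> = \<bar>G t - G x\<bar> * p (x - t)"
      using p[of "x - t"] by (simp add: left_diff_distrib[symmetric] abs_mult)
    ultimately show ?thesis by (simp add: algebra_simps)
  qed
  have diff: "((\<lambda>t. G t * p (x - t) - G x * p (x - t)) has_integral (A - G x * J0)) S"
    by (intro has_integral_diff A has_integral_mult_right J0)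
  have majorant: "((\<lambda>t. (L * c / 2) * ((x - t)\<^sup>2 * p (x - t)) + (L / (2 * c)) * p (x - t))
      has_integral ((L * c / 2) * J2 + (L / (2 * c)) * J0)) S"
    by (intro has_integral_add has_integral_mult_right J0 J2)
  show ?thesis
    using integral_norm_bound_integral[OF has_integral_integrable[OF diff] has_integral_integrable[OF majorant]]
      pointwise integral_unique[OF diff] integral_unique[OF majorant] by auto
qed

lemma jackson_kernel_shifted_integrals:
  assumes n: "1 \<le> n" and x: "x \<in> {0..1}"
  obtains J0 J2 where
    "((\<lambda>t. jackson_kernel n (x - t)) has_integral J0) {-1..2}"
    "((\<lambda>t. (x - t)\<^sup>2 * jackson_kernel n (x - t)) has_integral J2) {-1..2}"
    "integral {-1..1} (jackson_kernel n) \<le> J0" "J0 - integral {-1..1} (jackson_kernel n) \<le> J2"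
    "J0 \<le> 192 / real n" "J2 \<le> 192 / real n ^ 3"
proof
  let ?p = "jackson_kernel n" and ?q = "\<lambda>u. u\<^sup>2 * jackson_kernel n u"
  have x0: "0 \<le> x" and x1: "x \<le> 1" using x by auto
  show "((\<lambda>t. ?p (x - t)) has_integral integral {x-2..x+1} ?p) {-1..2}"
    using has_integral_reflect_shift_real[OF integrable_integral[OF jackson_kernel_integrable[of n "x-2" "x+1"]], of x]
    by simp
  show "((\<lambda>t. (x - t)\<^sup>2 * ?p (x - t)) has_integral integral {x-2..x+1} ?q) {-1..2}"
    using has_integral_reflect_shift_real[OF integrable_integral[OF jackson_kernel_moment_integrable[of n "x-2" "x+1"]], of x]
    by simp
  show "integral {-1..1} ?p \<le> integral {x-2..x+1} ?p"
    and "integral {x-2..x+1} ?p - integral {-1..1} ?p \<le> integral {x-2..x+1} ?q"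
    by (rule jackson_kernel_window[OF x])+
  have "integral {x-2..x+1} ?p \<le> integral {-2..2} ?p"
    by (rule integral_subset_le) (use x0 x1 jackson_kernel_integrable jackson_kernel_nonneg in auto)
  then show "integral {x-2..x+1} ?p \<le> 192 / real n" using jackson_kernel_integral_le[OF n] by linarith
  have "integral {x-2..x+1} ?q \<le> integral {-2..2} ?q"
    by (rule integral_subset_le) (use x0 x1 jackson_kernel_moment_integrable jackson_kernel_nonneg in auto)
  then show "integral {x-2..x+1} ?q \<le> 192 / real n ^ 3" using jackson_kernel_moment_le[OF n] by linarith
qed

text \<open>Integrating over $[-1,2]$ keeps $x - t$ in $[-2,2]$, where the kernel estimates hold, while
  the window $[x-2,x+1]$ still contains $[-1,1]$.\<close>
lemma jackson_convolution_approx: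
  assumes n: "1 \<le> n" and x: "x \<in> {0..1}"
    and G: "L-lipschitz_on UNIV G" and GB: "\<And>t. \<bar>G t\<bar> \<le> B"
  shows "\<bar>integral {-1..2} (\<lambda>t. G t * jackson_kernel n (x - t)) / integral {-1..1} (jackson_kernel n)
            - G x\<bar> \<le> 576 * (L + B) / real n"
proof -
  let ?p = "jackson_kernel n"
  define \<kappa> where "\<kappa> = integral {-1..1} ?p"
  define A where "A = integral {-1..2} (\<lambda>t. G t * ?p (x - t))"
  obtain J0 J2 where J0: "((\<lambda>t. ?p (x - t)) has_integral J0) {-1..2}"
    and J2: "((\<lambda>t. (x - t)\<^sup>2 * ?p (x - t)) has_integral J2) {-1..2}"
    and window: "\<kappa> \<le> J0" "J0 - \<kappa> \<le> J2" and J0_le: "J0 \<le> 192 / real n" and J2_le: "J2 \<le> 192 / real n ^ 3"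
    using jackson_kernel_shifted_integrals[OF n x] unfolding \<kappa>_def by blast
  have L0: "0 \<le> L" using lipschitz_on_nonneg[OF G] .
  have B0: "0 \<le> B" using GB[of 0] by linarith
  have npos: "0 < real n" using n by simp
  have \<kappa>_ge: "1 / (3 * real n) \<le> \<kappa>" unfolding \<kappa>_def by (rule jackson_kernel_integral_ge[OF n])
  then have \<kappa>_pos: "0 < \<kappa>" using npos by (smt (verit) divide_pos_pos)
  have "continuous_on {-1..2} (\<lambda>t. G t * ?p (x - t))"
    by (intro continuous_intros continuous_on_subset[OF lipschitz_on_continuous_on[OF G]]
        continuous_on_compose2[OF continuous_on_jackson_kernel[of UNIV]]) auto
  then have "((\<lambda>t. G t * ?p (x - t)) has_integral A) {-1..2}"
    unfolding A_def by (intro integrable_integral integrable_continuous_interval)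
  from lipschitz_convolution_deviation[OF G jackson_kernel_nonneg npos this J0 J2]
  have "\<bar>A - G x * J0\<bar> \<le> (L * real n / 2) * J2 + (L / (2 * real n)) * J0" .
  moreover have "A - \<kappa> * G x = (A - G x * J0) + G x * (J0 - \<kappa>)" by (simp add: algebra_simps)
  moreover have "\<bar>G x * (J0 - \<kappa>)\<bar> \<le> B * J2"
    using window GB[of x] by (simp add: abs_mult mult_mono')
  ultimately have "\<bar>A - \<kappa> * G x\<bar> \<le> (L * real n / 2) * J2 + (L / (2 * real n)) * J0 + B * J2"
    by linarith
  also have "\<dots> \<le> (L * real n / 2) * (192 / real n ^ 3) + (L / (2 * real n)) * (192 / real n)
      + B * (192 / real n ^ 3)"
    by (intro add_mono mult_left_mono J0_le J2_le) (use L0 B0 npos in auto)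
  also have "\<dots> \<le> 192 * (L + B) / (real n)\<^sup>2"
  proof -
    have "(real n)\<^sup>2 \<le> real n ^ 3" using n by (simp add: power_increasing)
    then have "B * (192 / real n ^ 3) \<le> 192 * B / (real n)\<^sup>2"
      using B0 npos divide_left_mono[of "(real n)\<^sup>2" "real n ^ 3" "192 * B"] by (simp add: mult.commute)
    moreover have "(L * real n / 2) * (192 / real n ^ 3) + (L / (2 * real n)) * (192 / real n)
        = 192 * L / (real n)\<^sup>2"
      using npos by (simp add: field_simps power2_eq_square power3_eq_cube)
    moreover have "192 * (L + B) / (real n)\<^sup>2 = 192 * L / (real n)\<^sup>2 + 192 * B / (real n)\<^sup>2"
      by (simp add: add_divide_distrib algebra_simps)
    ultimately show ?thesis by linarith
  qed
  finally have deviation: "\<bar>A - \<kappa> * G x\<bar> \<le> 192 * (L + B) / (real n)\<^sup>2" .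
  have "\<bar>A / \<kappa> - G x\<bar> = \<bar>A - \<kappa> * G x\<bar> / \<kappa>"
    using \<kappa>_pos by (simp add: field_simps abs_div)
  also have "\<dots> \<le> (192 * (L + B) / (real n)\<^sup>2) / (1 / (3 * real n))"
    by (rule frac_le) (use deviation \<kappa>_ge npos L0 B0 in auto)
  also have "\<dots> = 576 * (L + B) / real n" using npos by (simp add: field_simps power2_eq_square)
  finally show ?thesis unfolding A_def \<kappa>_def .
qed

section \<open>Polynomials with bounded coefficients\<close>

definition bounded_coeff_poly :: "nat \<Rightarrow> real \<Rightarrow> (real \<Rightarrow> real) \<Rightarrow> bool" where
  "bounded_coeff_poly D B f \<longleftrightarrow>
     (\<exists>c. (\<forall>i>D. c i = 0) \<and> (\<forall>i. \<bar>c i\<bar> \<le> B) \<and> (\<forall>u. f u = (\<Sum>i\<le>D. c i * u ^ i)))"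

lemma bounded_coeff_poly_mult:
  assumes f: "bounded_coeff_poly D1 B1 f" and g: "bounded_coeff_poly D2 B2 g" and B2: "0 \<le> B2"
  shows "bounded_coeff_poly (D1 + D2) (real (Suc D1) * B1 * B2) (\<lambda>u. f u * g u)"
proof -
  obtain a where a0: "\<And>i. i > D1 \<Longrightarrow> a i = 0" and ab: "\<And>i. \<bar>a i\<bar> \<le> B1"
    and af: "\<And>u. f u = (\<Sum>i\<le>D1. a i * u ^ i)" using f unfolding bounded_coeff_poly_def by blast
  obtain b where b0: "\<And>i. i > D2 \<Longrightarrow> b i = 0" and bb: "\<And>i. \<bar>b i\<bar> \<le> B2"
    and bg: "\<And>u. g u = (\<Sum>i\<le>D2. b i * u ^ i)" using g unfolding bounded_coeff_poly_def by blast
  define c where "c r = (\<Sum>k\<le>r. a k * b (r - k))" for r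
  have c0: "c r = 0" if "r > D1 + D2" for r
    unfolding c_def
  proof (intro sum.neutral ballI)
    fix k assume "k \<in> {..r}"
    show "a k * b (r - k) = 0"
      using that a0[of k] b0[of "r - k"] by (cases "k > D1") auto
  qed
  have cb: "\<bar>c r\<bar> \<le> real (Suc D1) * B1 * B2" for r
  proof -
    have "\<bar>c r\<bar> \<le> (\<Sum>k\<le>r. \<bar>a k\<bar> * \<bar>b (r - k)\<bar>)"
      unfolding c_def by (rule order_trans[OF sum_abs]) (simp add: abs_mult)
    also have "\<dots> \<le> (\<Sum>k\<le>r. \<bar>a k\<bar> * B2)"
      by (intro sum_mono mult_left_mono bb) auto
    also have "\<dots> \<le> (\<Sum>k\<le>r + D1. \<bar>a k\<bar>) * B2"
      unfolding sum_distrib_right[symmetric] by (intro mult_right_mono sum_mono2 B2) auto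
    also have "(\<Sum>k\<le>r + D1. \<bar>a k\<bar>) = (\<Sum>k\<le>D1. \<bar>a k\<bar>)"
      by (rule sum.mono_neutral_right) (use a0 in auto)
    also have "\<dots> \<le> real (Suc D1) * B1"
      using sum_bounded_above[of "{..D1}" "\<lambda>k. \<bar>a k\<bar>" B1] ab by simp
    finally show ?thesis using B2 by (simp add: mult_right_mono)
  qed
  have "f u * g u = (\<Sum>r\<le>D1 + D2. c r * u ^ r)" for u
    unfolding af bg c_def by (rule polynomial_product) (use a0 b0 in auto)
  then show ?thesis unfolding bounded_coeff_poly_def using c0 cb by blast
qed

lemma bounded_coeff_poly_power:
  assumes f: "bounded_coeff_poly D B f" and B: "0 \<le> B"
  shows "bounded_coeff_poly (Suc m * D) (real (Suc D) ^ m * B ^ Suc m) (\<lambda>u. f u ^ Suc m)"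
proof (induction m)
  case 0 then show ?case using f by simp
next
  case (Suc m)
  have "0 \<le> real (Suc D) ^ m * B ^ Suc m" using B by simp
  from bounded_coeff_poly_mult[OF f Suc this] show ?case
    by (simp add: mult_ac)
qed

lemma bounded_coeff_poly_sinc_taylor:
  "bounded_coeff_poly (6*n) (exp (real n)) (\<lambda>u. sinc_taylor (6*n) (real n * u))"
proof -
  define c where "c m = (if m < 6*n then sin_coeff (Suc m) * real n ^ m else 0)" for m
  have "\<bar>c m\<bar> \<le> exp (real n)" for m
  proof (cases "m < 6*n")
    case True
    have "\<bar>c m\<bar> \<le> (1 / fact (Suc m)) * real n ^ m"
      using True unfolding c_def by (simp add: abs_mult sin_coeff_def abs_div)
    also have "\<dots> \<le> (1 / fact m) * real n ^ m"
      by (rule mult_right_mono) (auto intro!: divide_left_mono fact_mono)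
    also have "\<dots> \<le> exp (real n)" using power_div_fact_le_exp[of "real n" m] by simp
    finally show ?thesis .
  qed (simp add: c_def)
  moreover have "sinc_taylor (6*n) (real n * u) = (\<Sum>i\<le>6*n. c i * u ^ i)" for u
    unfolding sinc_taylor_def c_def lessThan_Suc_atMost[symmetric] sum.lessThan_Suc
    by (auto simp: power_mult_distrib mult_ac intro: sum.cong)
  ultimately show ?thesis unfolding bounded_coeff_poly_def by (intro exI[of _ c]) (auto simp: c_def)
qed

lemma bounded_coeff_poly_jackson_kernel:
  "bounded_coeff_poly (24*n) (real (Suc (6*n)) ^ 3 * exp (real n) ^ 4) (jackson_kernel n)"
proof -
  have "bounded_coeff_poly (Suc 3 * (6*n)) (real (Suc (6*n)) ^ 3 * exp (real n) ^ Suc 3)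
      (\<lambda>u. sinc_taylor (6*n) (real n * u) ^ Suc 3)"
    by (rule bounded_coeff_poly_power[OF bounded_coeff_poly_sinc_taylor]) simp
  then show ?thesis by (simp add: jackson_kernel_def[abs_def])
qed

lemma power_diff_eq_sum_binomial:
  fixes x t :: real
  assumes "j \<le> D"
  shows "(x - t) ^ j = (\<Sum>i\<le>D. real (j choose i) * x ^ i * (- t) ^ (j - i))"
proof -
  have "(x - t) ^ j = (\<Sum>i\<le>j. real (j choose i) * x ^ i * (- t) ^ (j - i))"
    using binomial_ring[of x "- t" j] by simp
  also have "\<dots> = (\<Sum>i\<le>D. real (j choose i) * x ^ i * (- t) ^ (j - i))"
    by (rule sum.mono_neutral_left) (use assms in auto)
  finally show ?thesis .
qed

lemma sum_power_diff_eq: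
  fixes x t :: real
  shows "(\<Sum>j\<le>D. a j * (x - t) ^ j) = (\<Sum>i\<le>D. x ^ i * (\<Sum>j\<le>D. a j * real (j choose i) * (- t) ^ (j - i)))"
proof -
  have "(\<Sum>j\<le>D. a j * (x - t) ^ j) = (\<Sum>j\<le>D. \<Sum>i\<le>D. x ^ i * (a j * real (j choose i) * (- t) ^ (j - i)))"
    by (simp add: power_diff_eq_sum_binomial sum_distrib_left mult_ac)
  also have "\<dots> = (\<Sum>i\<le>D. x ^ i * (\<Sum>j\<le>D. a j * real (j choose i) * (- t) ^ (j - i)))"
    by (subst sum.swap) (simp add: sum_distrib_left)
  finally show ?thesis .
qed

lemma abs_integral_mult_power_le:
  fixes G :: "real \<Rightarrow> real"
  assumes G: "continuous_on UNIV G" and GB: "\<And>t. \<bar>G t\<bar> \<le> B"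
  shows "\<bar>integral {-1..2} (\<lambda>t. G t * (- t) ^ m)\<bar> \<le> 3 * B * 2 ^ m"
proof -
  have "norm (integral {-1..2} (\<lambda>t. G t * (- t) ^ m)) \<le> integral {-1..2::real} (\<lambda>t. B * 2 ^ m)"
  proof (rule integral_norm_bound_integral)
    show "(\<lambda>t. G t * (- t) ^ m) integrable_on {-1..2}"
      by (intro integrable_continuous_interval continuous_intros continuous_on_subset[OF G]) simp
    fix t :: real assume t: "t \<in> {-1..2}"
    have "\<bar>(- t) ^ m\<bar> \<le> 2 ^ m"
      unfolding power_abs by (intro power_mono) (use t in auto)
    then show "norm (G t * (- t) ^ m) \<le> B * 2 ^ m"
      unfolding real_norm_def abs_mult using GB[of 0] by (intro mult_mono GB) auto
  qed (rule integrable_const_ivl)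
  then show ?thesis by simp
qed

lemma convolution_bounded_coeff_poly:
  assumes h: "bounded_coeff_poly D P h" and G: "continuous_on UNIV G" and GB: "\<And>t. \<bar>G t\<bar> \<le> B"
  shows "\<exists>c. (\<forall>x. integral {-1..2} (\<lambda>t. G t * h (x - t)) = (\<Sum>i\<le>D. c i * x ^ i)) \<and>
             (\<forall>i. \<bar>c i\<bar> \<le> real (Suc D) * P * 4 ^ D * (3 * B))"
proof -
  obtain a where ab: "\<And>i. \<bar>a i\<bar> \<le> P" and ah: "\<And>u. h u = (\<Sum>i\<le>D. a i * u ^ i)"
    using h unfolding bounded_coeff_poly_def by blast
  have B0: "0 \<le> B" using GB[of 0] by linarith
  have P0: "0 \<le> P" using ab[of 0] by linarith
  define e where "e i j = integral {-1..2} (\<lambda>t. G t * (- t) ^ (j - i))" for i j :: nat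
  define c where "c i = (\<Sum>j\<le>D. a j * real (j choose i) * e i j)" for i
  have he: "((\<lambda>t. G t * (- t) ^ (j - i)) has_integral e i j) {-1..2}" for i j
    unfolding e_def
    by (intro integrable_integral integrable_continuous_interval continuous_intros
        continuous_on_subset[OF G]) simp
  have e_le: "\<bar>e i j\<bar> \<le> 3 * B * 2 ^ j" for i j
  proof -
    have "\<bar>e i j\<bar> \<le> 3 * B * 2 ^ (j - i)" unfolding e_def by (rule abs_integral_mult_power_le[OF G GB])
    also have "\<dots> \<le> 3 * B * 2 ^ j" using B0 by (intro mult_left_mono power_increasing) auto
    finally show ?thesis .
  qed
  have "integral {-1..2} (\<lambda>t. G t * h (x - t)) = (\<Sum>i\<le>D. c i * x ^ i)" for x
  proof -
    have "G t * h (x - t) = (\<Sum>i\<le>D. x ^ i * (\<Sum>j\<le>D. a j * real (j choose i) * (G t * (- t) ^ (j - i))))"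
      for t
      unfolding ah sum_power_diff_eq by (simp add: sum_distrib_left mult_ac)
    moreover have "((\<lambda>t. \<Sum>i\<le>D. x ^ i * (\<Sum>j\<le>D. a j * real (j choose i) * (G t * (- t) ^ (j - i))))
        has_integral (\<Sum>i\<le>D. x ^ i * c i)) {-1..2}"
      unfolding c_def by (intro has_integral_sum has_integral_mult_right he finite_atMost)
    ultimately show ?thesis by (simp add: integral_unique mult.commute)
  qed
  moreover have "\<bar>c i\<bar> \<le> real (Suc D) * P * 4 ^ D * (3 * B)" for i
  proof -
    have "\<bar>c i\<bar> \<le> (\<Sum>j\<le>D. \<bar>a j\<bar> * real (j choose i) * \<bar>e i j\<bar>)"
      unfolding c_def by (rule order_trans[OF sum_abs]) (simp add: abs_mult)
    also have "\<dots> \<le> (\<Sum>j\<le>D. P * 4 ^ D * (3 * B))"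
    proof (rule sum_mono)
      fix j assume j: "j \<in> {..D}"
      have "real (j choose i) \<le> 2 ^ j"
        using binomial_le_pow2[of j i] by (metis of_nat_le_iff of_nat_numeral of_nat_power)
      then have "\<bar>a j\<bar> * real (j choose i) * \<bar>e i j\<bar> \<le> P * 2 ^ j * (3 * B * 2 ^ j)"
        by (intro mult_mono ab e_le) (use P0 B0 in auto)
      also have "\<dots> = P * 4 ^ j * (3 * B)" by (simp add: power_mult_distrib[symmetric] mult_ac)
      also have "\<dots> \<le> P * 4 ^ D * (3 * B)"
        by (intro mult_right_mono mult_left_mono power_increasing) (use j P0 B0 in auto)
      finally show "\<bar>a j\<bar> * real (j choose i) * \<bar>e i j\<bar> \<le> P * 4 ^ D * (3 * B)" .
    qed
    finally show ?thesis by simp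
  qed
  ultimately show ?thesis by blast
qed

section \<open>Polynomial approximation of Lipschitz functions\<close>

lemma jackson_coeff_growth:
  "real n * real (Suc (24*n)) * (real (Suc (6*n)) ^ 3 * exp (real n) ^ 4) * 4 ^ (24*n)
     \<le> 10 ^ (21*n)"
proof -
  have bernoulli: "real (Suc (a * n)) \<le> real (Suc a) ^ n" for a
    using Bernoulli_inequality[of "real a" n] by (simp add: mult.commute)
  have "real n \<le> 2 ^ n"
    using less_exp[of n] by (metis of_nat_le_iff of_nat_numeral of_nat_power less_imp_le)
  moreover have "real (Suc (6*n)) ^ 3 \<le> (7 ^ 3) ^ n"
  proof -
    have "real (Suc (6*n)) ^ 3 \<le> (7 ^ n) ^ 3" by (rule power_mono) (use bernoulli[of 6] in simp_all)
    also have "\<dots> = (7 ^ 3) ^ n" by (simp only: power_mult[symmetric] mult.commute)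
    finally show ?thesis .
  qed
  moreover have "exp (real n) ^ 4 \<le> (3 ^ 4) ^ n"
  proof -
    have "exp (real n) ^ 4 \<le> (3 ^ n) ^ 4" by (rule power_mono[OF exp_of_nat_le_3_power]) simp
    also have "\<dots> = (3 ^ 4) ^ n" by (simp only: power_mult[symmetric] mult.commute)
    finally show ?thesis .
  qed
  moreover have "(4::real) ^ (24*n) = (4 ^ 24) ^ n" by (simp only: power_mult)
  ultimately have "real n * real (Suc (24*n)) * (real (Suc (6*n)) ^ 3 * exp (real n) ^ 4) * 4 ^ (24*n)
      \<le> 2 ^ n * 25 ^ n * ((7 ^ 3) ^ n * (3 ^ 4) ^ n) * (4 ^ 24) ^ n"
    using bernoulli[of 24] by (intro mult_mono) auto
  also have "\<dots> = (2 * 25 * 7 ^ 3 * 3 ^ 4 * 4 ^ 24) ^ n"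
    by (simp only: power_mult_distrib mult.assoc)
  also have "\<dots> \<le> (10 ^ 21) ^ n" by (rule power_mono) simp_all
  finally show ?thesis by (simp add: power_mult)
qed

lemma jackson_polynomial_approx:
  assumes n: "1 \<le> n" and G: "L-lipschitz_on UNIV G" and GB: "\<And>t. \<bar>G t\<bar> \<le> B"
  shows "\<exists>c. (\<forall>x\<in>{0..1}. \<bar>G x - (\<Sum>i\<le>24*n. c i * x ^ i)\<bar> \<le> 576 * (L + B) / real n) \<and>
             (\<forall>i. \<bar>c i\<bar> \<le> 9 * B * 10 ^ (21*n))"
proof -
  have B0: "0 \<le> B" using GB[of 0] by linarith
  obtain c0 where c0: "\<And>x. integral {-1..2} (\<lambda>t. G t * jackson_kernel n (x - t)) = (\<Sum>i\<le>24*n. c0 i * x ^ i)"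
    and c0_le: "\<And>i. \<bar>c0 i\<bar> \<le> real (Suc (24*n)) * (real (Suc (6*n)) ^ 3 * exp (real n) ^ 4) * 4 ^ (24*n) * (3 * B)"
    using convolution_bounded_coeff_poly[OF bounded_coeff_poly_jackson_kernel
        lipschitz_on_continuous_on[OF G] GB] by blast
  define \<kappa> where "\<kappa> = integral {-1..1} (jackson_kernel n)"
  have \<kappa>_ge: "1 / (3 * real n) \<le> \<kappa>" unfolding \<kappa>_def by (rule jackson_kernel_integral_ge[OF n])
  have npos: "0 < real n" using n by simp
  then have \<kappa>_pos: "0 < \<kappa>" using \<kappa>_ge by (smt (verit) divide_pos_pos)
  have "\<bar>G x - (\<Sum>i\<le>24*n. c0 i / \<kappa> * x ^ i)\<bar> \<le> 576 * (L + B) / real n" if "x \<in> {0..1}" for x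
    using jackson_convolution_approx[OF n that G GB]
    unfolding c0 \<kappa>_def[symmetric] by (simp add: sum_divide_distrib abs_minus_commute)
  moreover have "\<bar>c0 i / \<kappa>\<bar> \<le> 9 * B * 10 ^ (21*n)" for i
  proof -
    have "\<bar>c0 i / \<kappa>\<bar> \<le> \<bar>c0 i\<bar> / (1 / (3 * real n))"
      unfolding abs_divide using \<kappa>_pos \<kappa>_ge npos by (intro divide_left_mono) auto
    also have "\<dots> = 3 * real n * \<bar>c0 i\<bar>" by simp
    also have "\<dots> \<le> 3 * real n * (real (Suc (24*n)) * (real (Suc (6*n)) ^ 3 * exp (real n) ^ 4)
        * 4 ^ (24*n) * (3 * B))"
      using c0_le[of i] npos by (intro mult_left_mono) auto
    also have "\<dots> = 9 * B * (real n * real (Suc (24*n)) * (real (Suc (6*n)) ^ 3 * exp (real n) ^ 4)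
        * 4 ^ (24*n))"
      by (simp add: mult_ac)
    also have "\<dots> \<le> 9 * B * 10 ^ (21*n)"
      by (intro mult_left_mono jackson_coeff_growth) (use B0 in simp)
    finally show ?thesis .
  qed
  ultimately show ?thesis by (intro exI[of _ "\<lambda>i. c0 i / \<kappa>"]) auto
qed

text \<open>Degrees below 24 are covered by the zero polynomial; otherwise the Jackson kernel of order
  $\lfloor k/24 \rfloor$ is used.\<close>
lemma lipschitz_polynomial_approx:
  assumes k: "1 \<le> k" and G: "L-lipschitz_on UNIV G" and GB: "\<And>t. \<bar>G t\<bar> \<le> B"
  shows "\<exists>c. (\<forall>x\<in>{0..1}. \<bar>G x - (\<Sum>i\<le>k. c i * x ^ i)\<bar> \<le> 27648 * (L + B) / real k) \<and>
             (\<forall>i. \<bar>c i\<bar> \<le> 9 * B * 10 ^ (21*k))"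
proof -
  have L0: "0 \<le> L" using lipschitz_on_nonneg[OF G] .
  have B0: "0 \<le> B" using GB[of 0] by linarith
  show ?thesis
  proof (cases "k < 24")
    case True
    have "\<bar>G x\<bar> \<le> 27648 * (L + B) / real k" for x
    proof -
      have "B * real k \<le> B * 24" using True B0 by (intro mult_left_mono) auto
      then have "B \<le> 24 * B / real k" using k by (simp add: field_simps)
      also have "\<dots> \<le> 27648 * (L + B) / real k" using L0 B0 by (intro divide_right_mono) auto
      finally show ?thesis using GB[of x] by linarith
    qed
    then show ?thesis using B0 by (intro exI[of _ "\<lambda>_. 0"]) auto
  next
    case False
    define n where "n = k div 24"
    have n: "1 \<le> n" and nk: "24 * n \<le> k" using False unfolding n_def by linarith+
    have "k \<le> 48 * n" using False unfolding n_def by presburger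
    then have kn: "real k \<le> 48 * real n" by simp
    obtain c where c: "\<And>x. x \<in> {0..1} \<Longrightarrow> \<bar>G x - (\<Sum>i\<le>24*n. c i * x ^ i)\<bar> \<le> 576 * (L + B) / real n"
      and c_le: "\<And>i. \<bar>c i\<bar> \<le> 9 * B * 10 ^ (21*n)"
      using jackson_polynomial_approx[OF n G GB] by blast
    define c' where "c' i = (if i \<le> 24*n then c i else 0)" for i
    have sum_eq: "(\<Sum>i\<le>k. c' i * x ^ i) = (\<Sum>i\<le>24*n. c i * x ^ i)" for x
      unfolding c'_def by (rule sum.mono_neutral_cong_right) (use nk in auto)
    have err_le: "576 * (L + B) / real n \<le> 27648 * (L + B) / real k"
    proof -
      have "576 * (L + B) * real k \<le> 576 * (L + B) * (48 * real n)"
        by (intro mult_left_mono kn) (use L0 B0 in auto)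
      then show ?thesis using n k by (simp add: field_simps)
    qed
    have coeff_le: "9 * B * 10 ^ (21*n) \<le> 9 * B * 10 ^ (21*k)"
      using nk B0 by (intro mult_left_mono power_increasing) auto
    show ?thesis
    proof (intro exI[of _ c'] conjI ballI allI)
      fix x :: real assume "x \<in> {0..1}"
      then show "\<bar>G x - (\<Sum>i\<le>k. c' i * x ^ i)\<bar> \<le> 27648 * (L + B) / real k"
        using c err_le unfolding sum_eq by (blast intro: order_trans)
    next
      fix i show "\<bar>c' i\<bar> \<le> 9 * B * 10 ^ (21*k)"
        using c_le[of i] coeff_le B0 by (simp add: c'_def)
    qed
  qed
qed

section \<open>Power series with nonnegative coefficients\<close>

lemma suminf_power_ge_coeff_0:
  fixes w :: "nat \<Rightarrow> real"
  assumes w: "\<And>x. 0 \<le> w x" and \<theta>: "0 \<le> \<theta>" "ereal \<theta> < conv_radius w"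
  shows "w 0 \<le> (\<Sum>x. w x * \<theta> ^ x)"
proof -
  have "summable (\<lambda>x. w x * \<theta> ^ x)" by (rule summable_in_conv_radius) (use \<theta> in simp)
  from sum_le_suminf[OF this, of "{0}"] show ?thesis using w \<theta> by simp
qed

lemma suminf_power_mono:
  fixes w :: "nat \<Rightarrow> real"
  assumes w: "\<And>x. 0 \<le> w x" and st: "0 \<le> s" "s \<le> t" and t: "ereal t < conv_radius w"
  shows "(\<Sum>x. w x * s ^ x) \<le> (\<Sum>x. w x * t ^ x)"
proof (rule suminf_le)
  show "summable (\<lambda>x. w x * s ^ x)"
    by (rule summable_in_conv_radius) (use st t order.strict_trans1[of "ereal s" "ereal t"] in auto)
  show "summable (\<lambda>x. w x * t ^ x)" by (rule summable_in_conv_radius) (use st t in simp)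
  show "w x * s ^ x \<le> w x * t ^ x" for x by (intro mult_left_mono power_mono w st)
qed

lemma lipschitz_on_suminf_power:
  fixes w :: "nat \<Rightarrow> real"
  assumes w: "\<And>x. 0 \<le> w x" and \<theta>s: "0 \<le> \<theta>s" "ereal \<theta>s < conv_radius w"
  shows "(\<Sum>m. diffs w m * \<theta>s ^ m)-lipschitz_on {0..\<theta>s} (\<lambda>\<theta>. \<Sum>x. w x * \<theta> ^ x)"
proof -
  obtain r where r: "\<theta>s < r" "ereal r < conv_radius w"
    using ereal_dense2[OF \<theta>s(2)] by auto
  have summable: "summable (\<lambda>x. w x * z ^ x)" if "\<bar>z\<bar> < r" for z :: real
    by (rule summable_in_conv_radius) (use that r order.strict_trans[of "ereal \<bar>z\<bar>" "ereal r"] in auto)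
  have summable_r: "summable (\<lambda>x. w x * r ^ x)"
    by (rule summable_in_conv_radius) (use r \<theta>s in auto)
  have summable_diffs: "summable (\<lambda>m. diffs w m * \<xi> ^ m)" if "\<xi> \<in> {0..\<theta>s}" for \<xi>
    by (rule termdiff_converges[of _ r]) (use that r summable in auto)
  have diffs_nonneg: "0 \<le> diffs w m" for m using w[of "Suc m"] by (simp add: diffs_def)
  have deriv_bounds: "0 \<le> (\<Sum>m. diffs w m * \<xi> ^ m) \<and> (\<Sum>m. diffs w m * \<xi> ^ m) \<le> (\<Sum>m. diffs w m * \<theta>s ^ m)"
    if \<xi>: "\<xi> \<in> {0..\<theta>s}" for \<xi>
    using \<xi> \<theta>s diffs_nonneg
    by (intro conjI suminf_nonneg suminf_le summable_diffs mult_left_mono power_mono mult_nonneg_nonneg) auto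
  show ?thesis
  proof (rule lipschitz_onI)
    fix s t assume st: "s \<in> {0..\<theta>s}" "t \<in> {0..\<theta>s}"
    have "norm ((\<Sum>x. w x * s ^ x) - (\<Sum>x. w x * t ^ x)) \<le> (\<Sum>m. diffs w m * \<theta>s ^ m) * norm (s - t)"
    proof (rule field_differentiable_bound[OF convex_real_interval(5) _ _ st])
      fix \<xi> :: real assume \<xi>: "\<xi> \<in> {0..\<theta>s}"
      show "((\<lambda>\<theta>. \<Sum>x. w x * \<theta> ^ x) has_field_derivative (\<Sum>m. diffs w m * \<xi> ^ m)) (at \<xi> within {0..\<theta>s})"
        by (rule DERIV_subset[OF termdiffs_strong[of _ r]]) (use \<xi> r summable_r in auto)
      show "norm (\<Sum>m. diffs w m * \<xi> ^ m) \<le> (\<Sum>m. diffs w m * \<theta>s ^ m)"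
        using deriv_bounds[OF \<xi>] by simp
    qed
    then show "dist (\<Sum>x. w x * s ^ x) (\<Sum>x. w x * t ^ x) \<le> (\<Sum>m. diffs w m * \<theta>s ^ m) * dist s t"
      by (simp add: dist_real_def)
  next
    show "0 \<le> (\<Sum>m. diffs w m * \<theta>s ^ m)" using deriv_bounds[of \<theta>s] \<theta>s by auto
  qed
qed

section \<open>Approximation by the exponential family\<close>

lemma lipschitz_on_mult_real:
  fixes f g :: "'a::metric_space \<Rightarrow> real"
  assumes f: "Lf-lipschitz_on S f" and g: "Lg-lipschitz_on S g"
    and f_le: "\<And>x. x \<in> S \<Longrightarrow> \<bar>f x\<bar> \<le> Bf" and g_le: "\<And>x. x \<in> S \<Longrightarrow> \<bar>g x\<bar> \<le> Bg"
    and "0 \<le> Bf" "0 \<le> Bg"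
  shows "(Lf * Bg + Bf * Lg)-lipschitz_on S (\<lambda>x. f x * g x)"
proof (rule lipschitz_onI)
  have Lf: "0 \<le> Lf" and Lg: "0 \<le> Lg" using lipschitz_on_nonneg f g by auto
  then show "0 \<le> Lf * Bg + Bf * Lg" using assms by simp
  fix x y assume xy: "x \<in> S" "y \<in> S"
  have "f x * g x - f y * g y = (f x - f y) * g x + f y * (g x - g y)" by algebra
  then have "\<bar>f x * g x - f y * g y\<bar> \<le> \<bar>f x - f y\<bar> * \<bar>g x\<bar> + \<bar>f y\<bar> * \<bar>g x - g y\<bar>"
    by (metis abs_mult abs_triangle_ineq)
  also have "\<dots> \<le> (Lf * dist x y) * Bg + Bf * (Lg * dist x y)"
    using lipschitz_onD[OF f xy] lipschitz_onD[OF g xy] f_le g_le xy assms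
    by (intro add_mono mult_mono) (auto simp: dist_real_def)
  finally show "dist (f x * g x) (f y * g y) \<le> (Lf * Bg + Bf * Lg) * dist x y"
    by (simp add: dist_real_def algebra_simps)
qed

lemma lipschitz_on_rescaled_clamp:
  fixes f :: "real \<Rightarrow> real"
  assumes a: "0 < a" and f: "L-lipschitz_on {0..a} f"
  shows "(L * a)-lipschitz_on UNIV (\<lambda>y. f (clamp 0 a (a * y)))"
proof (rule lipschitz_onI)
  have clamp_in: "clamp 0 a y \<in> {0..a}" for y
    using clamp_in_interval[of 0 a y] a by (simp add: cbox_interval)
  have L0: "0 \<le> L" by (rule lipschitz_on_nonneg[OF f])
  then show "0 \<le> L * a" using a by simp
  fix x y :: real
  have "dist (f (clamp 0 a (a * x))) (f (clamp 0 a (a * y))) \<le> L * dist (clamp 0 a (a * x)) (clamp 0 a (a * y))"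
    by (rule lipschitz_onD[OF f clamp_in clamp_in])
  also have "\<dots> \<le> L * dist (a * x) (a * y)"
    by (intro mult_left_mono dist_clamps_le_dist_args L0)
  also have "\<dots> = L * a * dist x y"
    using a by (simp add: dist_real_def right_diff_distrib[symmetric] abs_mult)
  finally show "dist (f (clamp 0 a (a * x))) (f (clamp 0 a (a * y))) \<le> L * a * dist x y" .
qed

lemma sum_rescaled_fpmf:
  assumes "\<theta>s \<noteq> 0" and "\<And>x. w x \<noteq> 0"
  shows "(\<Sum>x\<le>k. c x / (\<theta>s ^ x * w x) * fpmf w x \<theta>) = gfun w \<theta> * (\<Sum>x\<le>k. c x * (\<theta> / \<theta>s) ^ x)"
  unfolding sum_distrib_left fpmf_def
  by (rule sum.cong) (use assms in \<open>auto simp: power_divide field_simps\<close>)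

lemma abs_diff_sum_rescaled_fpmf_le:
  assumes \<theta>s: "\<theta>s \<noteq> 0" and w: "\<And>x. 0 < w x" and Z_ge: "w 0 \<le> (\<Sum>x. w x * \<theta> ^ x)"
    and err: "\<bar>l \<theta> * (\<Sum>x. w x * \<theta> ^ x) - (\<Sum>i\<le>k. c i * (\<theta> / \<theta>s) ^ i)\<bar> \<le> \<epsilon>"
  shows "\<bar>l \<theta> - (\<Sum>x\<le>k. c x / (\<theta>s ^ x * w x) * fpmf w x \<theta>)\<bar> \<le> \<epsilon> / w 0"
proof -
  define Z where "Z = (\<Sum>x. w x * \<theta> ^ x)"
  have Z_pos: "0 < Z" using Z_ge w[of 0] unfolding Z_def by linarith
  have "l \<theta> - (\<Sum>x\<le>k. c x / (\<theta>s ^ x * w x) * fpmf w x \<theta>)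
      = (l \<theta> * Z - (\<Sum>i\<le>k. c i * (\<theta> / \<theta>s) ^ i)) / Z"
    unfolding sum_rescaled_fpmf[OF \<theta>s w[THEN less_imp_neq, symmetric]] gfun_def Z_def[symmetric]
    using Z_pos by (simp add: field_simps)
  also have "\<bar>\<dots>\<bar> \<le> \<epsilon> / w 0"
    unfolding abs_divide using err Z_ge Z_pos w[of 0] unfolding Z_def
    by (intro frac_le) (auto simp: abs_of_pos)
  finally show ?thesis .
qed

lemma lipschitz_rescaled_product:
  fixes l Z :: "real \<Rightarrow> real"
  assumes \<theta>s: "0 < \<theta>s" and l: "1-lipschitz_on {0..\<theta>s} l" and l0: "l 0 = 0"
    and Z: "LZ-lipschitz_on {0..\<theta>s} Z" and Z_le: "\<And>\<theta>. \<theta> \<in> {0..\<theta>s} \<Longrightarrow> \<bar>Z \<theta>\<bar> \<le> Zm"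
  shows "((Zm + \<theta>s * LZ) * \<theta>s)-lipschitz_on UNIV (\<lambda>y. l (clamp 0 \<theta>s (\<theta>s * y)) * Z (clamp 0 \<theta>s (\<theta>s * y)))"
    and "\<bar>l (clamp 0 \<theta>s (\<theta>s * y)) * Z (clamp 0 \<theta>s (\<theta>s * y))\<bar> \<le> \<theta>s * Zm"
proof -
  have clamp_in: "clamp 0 \<theta>s y \<in> {0..\<theta>s}" for y
    using clamp_in_interval[of 0 \<theta>s y] \<theta>s by (simp add: cbox_interval)
  have Zm0: "0 \<le> Zm" using Z_le[of \<theta>s] \<theta>s by fastforce
  have l_le: "\<bar>l \<theta>\<bar> \<le> \<theta>s" if "\<theta> \<in> {0..\<theta>s}" for \<theta>
    using lipschitz_onD[OF l that, of 0] l0 \<theta>s that by (simp add: dist_real_def)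
  have "(1 * Zm + \<theta>s * LZ)-lipschitz_on {0..\<theta>s} (\<lambda>\<theta>. l \<theta> * Z \<theta>)"
    using Z_le l_le \<theta>s Zm0 by (intro lipschitz_on_mult_real[OF l Z]) auto
  from lipschitz_on_rescaled_clamp[OF \<theta>s this]
  show "((Zm + \<theta>s * LZ) * \<theta>s)-lipschitz_on UNIV (\<lambda>y. l (clamp 0 \<theta>s (\<theta>s * y)) * Z (clamp 0 \<theta>s (\<theta>s * y)))"
    by simp
  show "\<bar>l (clamp 0 \<theta>s (\<theta>s * y)) * Z (clamp 0 \<theta>s (\<theta>s * y))\<bar> \<le> \<theta>s * Zm"
    unfolding abs_mult using l_le[OF clamp_in] Z_le[OF clamp_in] \<theta>s by (intro mult_mono) auto
qed

lemma fpmf_approx_of_lipschitz: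
  fixes w :: "nat \<Rightarrow> real" and l :: "real \<Rightarrow> real"
  assumes \<theta>s: "0 < \<theta>s" and w: "\<And>x. 0 < w x"
    and Z_ge: "\<And>\<theta>. \<theta> \<in> {0..\<theta>s} \<Longrightarrow> w 0 \<le> (\<Sum>x. w x * \<theta> ^ x)"
    and Z_le: "\<And>\<theta>. \<theta> \<in> {0..\<theta>s} \<Longrightarrow> (\<Sum>x. w x * \<theta> ^ x) \<le> Zm"
    and Z_lip: "LZ-lipschitz_on {0..\<theta>s} (\<lambda>\<theta>. \<Sum>x. w x * \<theta> ^ x)"
    and l: "1-lipschitz_on {0..\<theta>s} l" and l0: "l 0 = 0" and k: "1 \<le> k"
  shows "\<exists>b. (\<forall>\<theta>\<in>{0..\<theta>s}. \<bar>l \<theta> - (\<Sum>x\<le>k. b x * fpmf w x \<theta>)\<bar>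
                  \<le> 27648 * \<theta>s * (\<theta>s * LZ + 2 * Zm) / (w 0 * real k)) \<and>
             (\<forall>x\<le>k. \<bar>b x\<bar> \<le> 9 * \<theta>s * Zm * 10 ^ (21*k) * max 1 (1 / \<theta>s) ^ k / w x)"
proof -
  define Z where "Z \<theta> = (\<Sum>x. w x * \<theta> ^ x)" for \<theta> :: real
  define G where "G y = l (clamp 0 \<theta>s (\<theta>s * y)) * Z (clamp 0 \<theta>s (\<theta>s * y))" for y
  have Z_abs_le: "\<bar>Z \<theta>\<bar> \<le> Zm" if "\<theta> \<in> {0..\<theta>s}" for \<theta>
    using Z_ge[OF that] Z_le[OF that] w[of 0] unfolding Z_def by linarith
  have Zm0: "0 \<le> Zm" using Z_abs_le[of \<theta>s] \<theta>s by fastforce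
  note G = lipschitz_rescaled_product[OF \<theta>s l l0 Z_lip[folded Z_def] Z_abs_le, folded G_def]
  obtain c where c: "\<And>y. y \<in> {0..1} \<Longrightarrow> \<bar>G y - (\<Sum>i\<le>k. c i * y ^ i)\<bar>
        \<le> 27648 * ((Zm + \<theta>s * LZ) * \<theta>s + \<theta>s * Zm) / real k"
    and c_le: "\<And>i. \<bar>c i\<bar> \<le> 9 * (\<theta>s * Zm) * 10 ^ (21*k)"
    using lipschitz_polynomial_approx[OF k G] by blast
  show ?thesis
  proof (intro exI[of _ "\<lambda>x. c x / (\<theta>s ^ x * w x)"] conjI ballI allI impI)
    fix \<theta> assume \<theta>: "\<theta> \<in> {0..\<theta>s}"
    have y: "\<theta> / \<theta>s \<in> {0..1}" using \<theta> \<theta>s by auto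
    have "G (\<theta> / \<theta>s) = l \<theta> * Z \<theta>"
      unfolding G_def using \<theta> \<theta>s clamp_cancel_cbox[of \<theta> 0 \<theta>s] by (simp add: cbox_interval)
    with c[OF y] have "\<bar>l \<theta> - (\<Sum>x\<le>k. c x / (\<theta>s ^ x * w x) * fpmf w x \<theta>)\<bar>
        \<le> (27648 * ((Zm + \<theta>s * LZ) * \<theta>s + \<theta>s * Zm) / real k) / w 0"
      using \<theta>s unfolding Z_def by (intro abs_diff_sum_rescaled_fpmf_le w Z_ge[OF \<theta>]) auto
    then show "\<bar>l \<theta> - (\<Sum>x\<le>k. c x / (\<theta>s ^ x * w x) * fpmf w x \<theta>)\<bar>
        \<le> 27648 * \<theta>s * (\<theta>s * LZ + 2 * Zm) / (w 0 * real k)"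
      by (simp add: algebra_simps)
  next
    fix x assume x: "x \<le> k"
    have "(1 / \<theta>s) ^ x \<le> max 1 (1 / \<theta>s) ^ k"
      by (rule order_trans[OF power_mono power_increasing[OF x]]) (use \<theta>s in auto)
    then have "\<bar>c x\<bar> * (1 / \<theta>s) ^ x \<le> 9 * \<theta>s * Zm * 10 ^ (21*k) * max 1 (1 / \<theta>s) ^ k"
      using c_le[of x] \<theta>s Zm0 by (intro mult_mono) auto
    then show "\<bar>c x / (\<theta>s ^ x * w x)\<bar> \<le> 9 * \<theta>s * Zm * 10 ^ (21*k) * max 1 (1 / \<theta>s) ^ k / w x"
      using w[of x] \<theta>s by (simp add: abs_divide abs_mult divide_right_mono power_one_over field_simps)
  qed
qed

lemma fpmf_approx_uniform:
  fixes w :: "nat \<Rightarrow> real"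
  assumes \<theta>s: "0 < \<theta>s" and w: "\<And>x. 0 < w x" and radius: "ereal \<theta>s < conv_radius w"
  obtains E P M where "0 \<le> P" and "1 \<le> M"
    and "\<And>l k. 1-lipschitz_on {0..\<theta>s} l \<Longrightarrow> l 0 = 0 \<Longrightarrow> 1 \<le> k \<Longrightarrow>
           \<exists>b. (\<forall>\<theta>\<in>{0..\<theta>s}. \<bar>l \<theta> - (\<Sum>x\<le>k. b x * fpmf w x \<theta>)\<bar> \<le> E / real k) \<and>
               (\<forall>x\<le>k. \<bar>b x\<bar> \<le> P * M ^ k / w x)"
proof -
  define Zm where "Zm = (\<Sum>x. w x * \<theta>s ^ x)"
  define LZ where "LZ = (\<Sum>m. diffs w m * \<theta>s ^ m)"
  have w_nonneg: "0 \<le> w x" for x using w[of x] by simp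
  have radius': "ereal \<theta> < conv_radius w" if "\<theta> \<in> {0..\<theta>s}" for \<theta>
    using that radius order.strict_trans1[of "ereal \<theta>" "ereal \<theta>s"] by auto
  have Z_ge: "w 0 \<le> (\<Sum>x. w x * \<theta> ^ x)" and Z_le: "(\<Sum>x. w x * \<theta> ^ x) \<le> Zm"
    if "\<theta> \<in> {0..\<theta>s}" for \<theta>
    using that suminf_power_ge_coeff_0[OF w_nonneg _ radius'[OF that]]
      suminf_power_mono[OF w_nonneg _ _ radius] unfolding Zm_def by auto
  have Z_lip: "LZ-lipschitz_on {0..\<theta>s} (\<lambda>\<theta>. \<Sum>x. w x * \<theta> ^ x)"
    unfolding LZ_def using lipschitz_on_suminf_power[OF w_nonneg] \<theta>s radius by simp
  have "0 \<le> 9 * \<theta>s * Zm" using Z_ge[of \<theta>s] Z_le[of \<theta>s] w[of 0] \<theta>s by simp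
  moreover have "1 \<le> 10 ^ 21 * max 1 (1 / \<theta>s)"
    using mult_mono[of 1 "10 ^ 21" 1 "max 1 (1 / \<theta>s)"] by simp
  moreover have "\<exists>b. (\<forall>\<theta>\<in>{0..\<theta>s}. \<bar>l \<theta> - (\<Sum>x\<le>k. b x * fpmf w x \<theta>)\<bar>
        \<le> (27648 * \<theta>s * (\<theta>s * LZ + 2 * Zm) / w 0) / real k) \<and>
      (\<forall>x\<le>k. \<bar>b x\<bar> \<le> (9 * \<theta>s * Zm) * (10 ^ 21 * max 1 (1 / \<theta>s)) ^ k / w x)"
    if "1-lipschitz_on {0..\<theta>s} l" "l 0 = 0" "1 \<le> k" for l k
  proof -
    have err: "27648 * \<theta>s * (\<theta>s * LZ + 2 * Zm) / (w 0 * real k)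
        = (27648 * \<theta>s * (\<theta>s * LZ + 2 * Zm) / w 0) / real k" by simp
    have coeff: "9 * \<theta>s * Zm * 10 ^ (21*k) * max 1 (1 / \<theta>s) ^ k
        = (9 * \<theta>s * Zm) * (10 ^ 21 * max 1 (1 / \<theta>s)) ^ k"
      by (simp add: power_mult_distrib power_mult)
    show ?thesis using fpmf_approx_of_lipschitz[OF \<theta>s w Z_ge Z_le Z_lip that] unfolding err coeff .
  qed
  ultimately show thesis by (rule that)
qed

lemma div_weight_le_power_Max:
  fixes w :: "nat \<Rightarrow> real"
  assumes w: "\<And>x. 0 < w x" and k: "1 \<le> k" and x: "x \<le> k" and P: "0 \<le> P" and M: "1 \<le> M"
    and C: "max 1 (P * max 1 (w 1 / w 0)) * M \<le> C"
  shows "P * M ^ k / w x \<le> C ^ k * (MAX x\<in>{1..k}. 1 / w x)"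
proof -
  define \<rho> where "\<rho> = max 1 (w 1 / w 0)"
  define a where "a = max 1 (P * \<rho>)"
  define MX where "MX = (MAX x\<in>{1..k}. 1 / w x)"
  have MX_ge: "1 / w y \<le> MX" if "y \<in> {1..k}" for y
    unfolding MX_def by (rule Max_ge) (use that in auto)
  have MX0: "0 \<le> MX"
    using MX_ge[of 1] k w[of 1] by (smt (verit) atLeastAtMost_iff divide_pos_pos order_refl)
  have \<rho>: "1 \<le> \<rho>" unfolding \<rho>_def by simp
  have inv_w: "1 / w x \<le> \<rho> * MX"
  proof (cases "x = 0")
    case True
    have "1 / w 0 = (w 1 / w 0) * (1 / w 1)" using w[of 1] by simp
    also have "\<dots> \<le> \<rho> * MX" unfolding \<rho>_def using w[of 0] w[of 1] k MX_ge[of 1]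
      by (intro mult_mono) auto
    finally show ?thesis using True by simp
  next
    case False
    then have "1 / w x \<le> MX" using MX_ge x by simp
    then show ?thesis using mult_right_mono[OF \<rho> MX0] by simp
  qed
  have "P * M ^ k / w x = P * M ^ k * (1 / w x)" by simp
  also have "\<dots> \<le> P * M ^ k * (\<rho> * MX)"
    using inv_w P M by (intro mult_left_mono) auto
  also have "\<dots> = (P * \<rho>) * M ^ k * MX" by (simp add: mult_ac)
  also have "\<dots> \<le> a ^ k * M ^ k * MX"
  proof -
    have "P * \<rho> \<le> a ^ k"
      unfolding a_def using power_increasing[OF k, of "max 1 (P * \<rho>)"] by auto
    then show ?thesis using M MX0 by (intro mult_right_mono) auto
  qed
  also have "\<dots> = (a * M) ^ k * MX" by (simp add: power_mult_distrib)
  also have "\<dots> \<le> C ^ k * MX"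
    using C M MX0 unfolding a_def \<rho>_def by (intro mult_right_mono power_mono) auto
  finally show ?thesis unfolding MX_def .
qed

theorem lemma5p4:
  fixes w :: "nat \<Rightarrow> real" and \<theta>s :: real
  assumes "\<theta>s > 0"
    and "\<And>x. w x > 0"
    and "ereal \<theta>s < conv_radius w"
  shows "\<exists>C>0. \<forall>l :: real \<Rightarrow> real. \<forall>k::nat.
           1-lipschitz_on {0..\<theta>s} l \<longrightarrow> l 0 = 0 \<longrightarrow> k \<ge> 1 \<longrightarrow>
           (\<exists>b :: nat \<Rightarrow> real.
              (\<forall>\<theta>\<in>{0..\<theta>s}. \<bar>l \<theta> - (\<Sum>x\<le>k. b x * fpmf w x \<theta>)\<bar> \<le> C / real k) \<and>
              (\<forall>x\<le>k. \<bar>b x\<bar> \<le> C ^ k * (MAX x\<in>{1..k}. 1 / w x)))"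
proof -
  obtain E P M where P: "0 \<le> P" and M: "1 \<le> M" and approx: "\<And>l k. 1-lipschitz_on {0..\<theta>s} l \<Longrightarrow>
      l 0 = 0 \<Longrightarrow> 1 \<le> k \<Longrightarrow> \<exists>b. (\<forall>\<theta>\<in>{0..\<theta>s}. \<bar>l \<theta> - (\<Sum>x\<le>k. b x * fpmf w x \<theta>)\<bar> \<le> E / real k) \<and>
        (\<forall>x\<le>k. \<bar>b x\<bar> \<le> P * M ^ k / w x)"
    by (rule fpmf_approx_uniform[OF assms]) (rule that)
  define C where "C = max E (max 1 (P * max 1 (w 1 / w 0)) * M)"
  have C_ge: "E \<le> C" "max 1 (P * max 1 (w 1 / w 0)) * M \<le> C" unfolding C_def by auto
  have "1 \<le> max 1 (P * max 1 (w 1 / w 0)) * M"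
    using M mult_mono[of 1 "max 1 (P * max 1 (w 1 / w 0))" 1 M] by simp
  then have C_pos: "0 < C" using C_ge by linarith
  show ?thesis
  proof (intro exI[of _ C] conjI allI impI C_pos)
    fix l :: "real \<Rightarrow> real" and k :: nat
    assume "1-lipschitz_on {0..\<theta>s} l" "l 0 = 0" and k: "1 \<le> k"
    then obtain b where err: "\<And>\<theta>. \<theta> \<in> {0..\<theta>s} \<Longrightarrow> \<bar>l \<theta> - (\<Sum>x\<le>k. b x * fpmf w x \<theta>)\<bar> \<le> E / real k"
      and coeff: "\<And>x. x \<le> k \<Longrightarrow> \<bar>b x\<bar> \<le> P * M ^ k / w x"
      using approx by blast
    show "\<exists>b. (\<forall>\<theta>\<in>{0..\<theta>s}. \<bar>l \<theta> - (\<Sum>x\<le>k. b x * fpmf w x \<theta>)\<bar> \<le> C / real k) \<and>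
              (\<forall>x\<le>k. \<bar>b x\<bar> \<le> C ^ k * (MAX x\<in>{1..k}. 1 / w x))"
    proof (intro exI[of _ b] conjI ballI allI impI)
      fix \<theta> assume "\<theta> \<in> {0..\<theta>s}"
      then show "\<bar>l \<theta> - (\<Sum>x\<le>k. b x * fpmf w x \<theta>)\<bar> \<le> C / real k"
        using err divide_right_mono[OF C_ge(1), of "real k"] by fastforce
    next
      fix x assume "x \<le> k"
      then show "\<bar>b x\<bar> \<le> C ^ k * (MAX x\<in>{1..k}. 1 / w x)"
        using coeff div_weight_le_power_Max[of w, OF assms(2) k _ P M C_ge(2)] by fastforce
    qed
  qed
qed

end
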